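(* There does not exist any generalized right linear one-way jumping finite automaton (GRLOWJFA) that accepts the language $Dc=\{wc: w\in D\}\subseteq\{a,b,c\}^*$, where $D$ is the Dyck language over $\{a,b\}$.
   Context: The Dyck language $D\subseteq\{a,b\}^*$ consists of the words $w$ with $|w|_a=|w|_b$ such that every prefix $u$ of $w$ has $|u|_a\ge|u|_b$ ($a$ opening, $b$ closing bracket; $|w|_a$ counts occurrences of $a$). "Subword" means a contiguous factor. A GRLOWJFA is a tuple $\mathcal{A}=(\Sigma,Q,q_0,F,R)$ with $\Sigma$ a finite alphabet, $Q$ a finite state set, $q_0\in Q$, $F\subseteq Q$, and $R\subset Q\times\Sigma^+\times Q$ a finite set of rules such that for each $p\in Q$, $w\in\Sigma^+$ at most one $q$ has $(p,w,q)\in R$ (meaning: go from $p$ to $q$ deleting $w$). $\Sigma_p=\{w:(p,w,q)\in R\text{ for some }q\}$. Configurations lie in $\Sigma^*Q\Sigma^*$. Moves $\curvearrowright$: (1) for $t,u,v\in\Sigma^*$ and $(p,x,q)\in R$: $tpuxv\curvearrowright tuqv$ provided $u$ contains no word of $\Sigma_p$ as a subword and there are no $u_1,x_2\in\Sigma^*$, $u_2,x_1\in\Sigma^+$ with $u=u_1u_2$, $x=x_1x_2$, $u_2x_1=x$; (2) for $x\in\Sigma^+$, $y\in\Sigma^*$ with $y$ containing no word of $\Sigma_p$ as a subword: $xpy\curvearrowright pxy$. The accepted language is $L_{GRL}(\mathcal{A})=\{w\in\Sigma^*: q_0w\curvearrowright^* q_f \text{ for some } q_f\in F\}$. *)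

theory Defs
  imports Main "HOL-Library.Sublist"
begin

datatype abc = La | Lb | Lc

definition dyck :: "abc list \<Rightarrow> bool" where
  "dyck w \<longleftrightarrow> set w \<subseteq> {La, Lb}
     \<and> count_list w La = count_list w Lb
     \<and> (\<forall>u. prefix u w \<longrightarrow> count_list u La \<ge> count_list u Lb)"

definition Dc :: "abc list set" where
  "Dc = {w @ [Lc] | w. dyck w}"

definition grlowjfa :: "'q set \<Rightarrow> 'q \<Rightarrow> 'q set \<Rightarrow> ('q \<times> abc list \<times> 'q) set \<Rightarrow> bool" where
  "grlowjfa Q q0 F R \<longleftrightarrow> finite Q \<and> q0 \<in> Q \<and> F \<subseteq> Q \<and> finite R
     \<and> (\<forall>(p, w, q) \<in> R. p \<in> Q \<and> w \<noteq> [] \<and> q \<in> Q)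
     \<and> (\<forall>p w q q'. (p, w, q) \<in> R \<longrightarrow> (p, w, q') \<in> R \<longrightarrow> q = q')"

definition Sigma_p :: "('q \<times> abc list \<times> 'q) set \<Rightarrow> 'q \<Rightarrow> abc list set" where
  "Sigma_p R p = {w. \<exists>q. (p, w, q) \<in> R}"

definition avoids :: "('q \<times> abc list \<times> 'q) set \<Rightarrow> 'q \<Rightarrow> abc list \<Rightarrow> bool" where
  "avoids R p u \<longleftrightarrow> (\<forall>w \<in> Sigma_p R p. \<not> sublist w u)"

text \<open>A configuration t p v (a word of the form Sigma* Q Sigma*) is represented
  as the triple (t, p, v).\<close>
inductive move :: "('q \<times> abc list \<times> 'q) set \<Rightarrow> abc list \<times> 'q \<times> abc list
    \<Rightarrow> abc list \<times> 'q \<times> abc list \<Rightarrow> bool" for R where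
  delete: "\<lbrakk> (p, x, q) \<in> R; avoids R p u;
             \<not> (\<exists>u1 u2 x1 x2. u = u1 @ u2 \<and> x = x1 @ x2 \<and> u2 \<noteq> [] \<and> x1 \<noteq> [] \<and> u2 @ x1 = x) \<rbrakk>
           \<Longrightarrow> move R (t, p, u @ x @ v) (t @ u, q, v)"
| jump: "\<lbrakk> x \<noteq> []; avoids R p y \<rbrakk> \<Longrightarrow> move R (x, p, y) ([], p, x @ y)"

definition L_GRL :: "'q \<Rightarrow> 'q set \<Rightarrow> ('q \<times> abc list \<times> 'q) set \<Rightarrow> abc list set" where
  "L_GRL q0 F R = {w. \<exists>qf \<in> F. (move R)\<^sup>*\<^sup>* ([], q0, w) ([], qf, [])}"

end

theory Submission
  imports Defs
begin

text \<open>
  Suppose a GRLOWJFA whose rules delete at most \<open>K\<close> letters accepts \<open>Dc\<close>, and run it on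
  \<open>a\<^sup>n b\<^sup>n c\<close>. Between two jumps the automaton deletes, along a walk in its rule graph, a
  scattered subword of the current tape, which has all its \<open>a\<close>'s first. Pumping a cycle of an
  accepting walk yields another accepted word, so every such cycle deletes equally many \<open>a\<close>'s
  and \<open>b\<close>'s and no \<open>c\<close>; hence the \<open>a\<close>-part and the \<open>a\<close>-free part of the walk are cycle-free,
  and a phase deletes at most \<open>K(2|Q|+1)\<close> letters.

  A state \<open>p\<close> in which the automaton jumps after having moved its head lies on no cycle: given a
  cycle \<open>z\<close> at \<open>p\<close>, append \<open>z\<close> to the input. The run reaches \<open>p\<close> as before, but now deletes \<open>z\<close>
  instead of jumping (the rest of the tape ends in \<open>c\<close>, which cannot overlap \<open>z\<close>), returns to
  \<open>p\<close>, jumps, and accepts; yet the new input ends in a letter of \<open>z\<close> rather than \<open>c\<close>. So the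
  set of states reachable by nonempty walks shrinks at every jump, there are at most \<open>|Q|\<close>
  jumps, and only \<open>K(2|Q|+1)(|Q|+1)\<close> letters can be deleted, fewer than \<open>2n+1\<close> for large \<open>n\<close>.
\<close>

inductive walk :: "('q \<times> abc list \<times> 'q) set \<Rightarrow> 'q \<Rightarrow> abc list \<Rightarrow> 'q \<Rightarrow> bool" for R where
  nil: "walk R q [] q"
| step: "(q, x, q') \<in> R \<Longrightarrow> walk R q' w q'' \<Longrightarrow> walk R q (x @ w) q''"

lemma walk_append: "walk R p u q \<Longrightarrow> walk R q v r \<Longrightarrow> walk R p (u @ v) r"
  by (induction rule: walk.induct) (auto intro: walk.step)

lemma walk_single: "(p, x, q) \<in> R \<Longrightarrow> walk R p x q"
  using walk.step[OF _ walk.nil] by fastforce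

lemma walk_snoc: "walk R p w q \<Longrightarrow> (q, x, r) \<in> R \<Longrightarrow> walk R p (w @ x) r"
  by (rule walk_append[OF _ walk_single])

lemma walk_in_states:
  "walk R p w q \<Longrightarrow> p \<in> Q \<Longrightarrow> (\<And>s x s'. (s, x, s') \<in> R \<Longrightarrow> s' \<in> Q) \<Longrightarrow> q \<in> Q"
  by (induction rule: walk.induct) auto

lemma walk_split_append:
  assumes "walk R p (u @ v) q" and "\<And>s x s'. (s, x, s') \<in> R \<Longrightarrow> length x \<le> K"
  obtains u1 u2 v1 v2 s s' where "u = u1 @ u2" "v = v1 @ v2" "walk R p u1 s"
    "walk R s (u2 @ v1) s'" "walk R s' v2 q" "length (u2 @ v1) \<le> K"
proof -
  have "\<exists>u1 u2 v1 v2 s s'. u = u1 @ u2 \<and> v = v1 @ v2 \<and> walk R p u1 s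
    \<and> walk R s (u2 @ v1) s' \<and> walk R s' v2 q \<and> length (u2 @ v1) \<le> K"
    if "walk R p w q" "w = u @ v" for w
    using that
  proof (induction arbitrary: u rule: walk.induct)
    case (nil p)
    then show ?case by (auto intro: walk.nil)
  next
    case (step p x p' w q)
    from \<open>x @ w = u @ v\<close> obtain us where "x = u @ us \<and> us @ w = v \<or> x @ us = u \<and> w = us @ v"
      by (auto simp: append_eq_append_conv2)
    then show ?case
    proof
      assume "x = u @ us \<and> us @ w = v"
      then have "u = [] @ u" "v = us @ w" "walk R p (u @ us) p'" "length (u @ us) \<le> K"
        using step.hyps(1) assms(2)[OF step.hyps(1)] by (auto intro: walk_single)
      with step.hyps(2) walk.nil[of R p] show ?thesis by blast
    next
      assume split: "x @ us = u \<and> w = us @ v"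
      then obtain u1 u2 v1 v2 s s' where "us = u1 @ u2" "v = v1 @ v2" "walk R p' u1 s"
        "walk R s (u2 @ v1) s'" "walk R s' v2 q" "length (u2 @ v1) \<le> K"
        using step.IH by blast
      moreover from this(1,3) split step.hyps(1)
      have "u = (x @ u1) @ u2" "walk R p (x @ u1) s" by (auto intro: walk.step)
      ultimately show ?thesis by blast
    qed
  qed
  from this[OF assms(1) refl] that show thesis by blast
qed

definition cycle_free :: "('q \<times> abc list \<times> 'q) set \<Rightarrow> 'q \<Rightarrow> abc list \<Rightarrow> 'q \<Rightarrow> bool" where
  "cycle_free R p w q \<longleftrightarrow>
    (\<forall>w1 z w2 s. w = w1 @ z @ w2 \<and> walk R p w1 s \<and> walk R s z s \<and> walk R s w2 q \<longrightarrow> z = [])"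

definition visited :: "('q \<times> abc list \<times> 'q) set \<Rightarrow> 'q \<Rightarrow> abc list \<Rightarrow> 'q \<Rightarrow> 'q set" where
  "visited R p w q = {s. \<exists>w1 w2. w = w1 @ w2 \<and> walk R p w1 s \<and> walk R s w2 q}"

lemma visited_subset:
  assumes "p \<in> Q" "\<And>s x s'. (s, x, s') \<in> R \<Longrightarrow> s' \<in> Q"
  shows "visited R p w q \<subseteq> Q"
proof
  fix s assume "s \<in> visited R p w q"
  then obtain w1 where "walk R p w1 s" unfolding visited_def by blast
  then show "s \<in> Q" using assms by (rule walk_in_states)
qed

lemma visited_Cons:
  assumes "(p, x, p') \<in> R" "walk R p' w q"
  shows "insert p (visited R p' w q) \<subseteq> visited R p (x @ w) q"
proof -
  have "x @ w = [] @ x @ w" "walk R p (x @ w) q" using assms by (auto intro: walk.step)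
  with walk.nil[of R p] have "p \<in> visited R p (x @ w) q" unfolding visited_def by blast
  moreover have "s \<in> visited R p (x @ w) q" if "s \<in> visited R p' w q" for s
  proof -
    from that obtain w1 w2 where "w = w1 @ w2" "walk R p' w1 s" "walk R s w2 q"
      unfolding visited_def by blast
    with assms(1) have "x @ w = (x @ w1) @ w2" "walk R p (x @ w1) s" by (auto intro: walk.step)
    with \<open>walk R s w2 q\<close> show ?thesis unfolding visited_def by blast
  qed
  ultimately show ?thesis by blast
qed

lemma cycle_free_Cons:
  assumes "cycle_free R p (x @ w) q" "(p, x, p') \<in> R"
  shows "cycle_free R p' w q"
  unfolding cycle_free_def
proof (intro allI impI)
  fix w1 z w2 s
  assume "w = w1 @ z @ w2 \<and> walk R p' w1 s \<and> walk R s z s \<and> walk R s w2 q"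
  with assms(2) have "x @ w = (x @ w1) @ z @ w2 \<and> walk R p (x @ w1) s \<and> walk R s z s \<and> walk R s w2 q"
    by (auto intro: walk.step)
  then show "z = []" using assms(1) unfolding cycle_free_def by (elim allE impE)
qed

lemma cycle_free_Cons_not_visited:
  assumes "cycle_free R p (x @ w) q" "(p, x, p') \<in> R" "x \<noteq> []"
  shows "p \<notin> visited R p' w q"
proof
  assume "p \<in> visited R p' w q"
  then obtain w1 w2 where "w = w1 @ w2" "walk R p' w1 p" "walk R p w2 q"
    unfolding visited_def by blast
  with assms(2) have "x @ w = [] @ (x @ w1) @ w2" "walk R p (x @ w1) p"
    by (auto intro: walk.step)
  with \<open>walk R p w2 q\<close> walk.nil[of R p] have "x @ w1 = []"
    using assms(1) unfolding cycle_free_def by (elim allE impE) blast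
  with assms(3) show False by simp
qed

lemma cycle_free_length:
  assumes "walk R p w q" "cycle_free R p w q" "finite Q" "p \<in> Q"
    and rules: "\<forall>(s, x, s') \<in> R. x \<noteq> [] \<and> length x \<le> K \<and> s' \<in> Q"
  shows "length w + K \<le> K * card (visited R p w q)"
  using assms(1,2,4)
proof (induction rule: walk.induct)
  case (nil p)
  have "p \<in> visited R p [] p" unfolding visited_def by (auto intro: walk.nil)
  moreover have "visited R p [] p \<subseteq> Q" using nil(2) by (rule visited_subset) (use rules in auto)
  then have "finite (visited R p [] p)" using \<open>finite Q\<close> by (rule finite_subset)
  ultimately have "1 \<le> card (visited R p [] p)" by (metis One_nat_def Suc_leI card_gt_0_iff empty_iff)
  then show ?case by simp
next
  case (step p x p' w q)
  have x: "x \<noteq> []" "length x \<le> K" and "p' \<in> Q" using rules step.hyps(1) by auto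
  have "visited R p (x @ w) q \<subseteq> Q" using step.prems(2) by (rule visited_subset) (use rules in auto)
  then have "finite (visited R p (x @ w) q)" using \<open>finite Q\<close> by (rule finite_subset)
  then have "card (insert p (visited R p' w q)) \<le> card (visited R p (x @ w) q)"
    using visited_Cons[OF step.hyps] by (rule card_mono)
  moreover have "p \<notin> visited R p' w q"
    using step.prems(1) step.hyps(1) x(1) by (rule cycle_free_Cons_not_visited)
  then have "card (insert p (visited R p' w q)) = card (visited R p' w q) + 1"
    using \<open>finite (visited R p (x @ w) q)\<close> visited_Cons[OF step.hyps]
    by (metis Suc_eq_plus1 card_insert_disjoint finite_insert finite_subset)
  moreover have "length w + K \<le> K * card (visited R p' w q)"
    using step.IH cycle_free_Cons[OF step.prems(1) step.hyps(1)] \<open>p' \<in> Q\<close> by blast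
  ultimately show ?case
    using x(2) mult_le_mono2[of "card (visited R p' w q) + 1" "card (visited R p (x @ w) q)" K]
    by (simp add: algebra_simps)
qed

lemma walk_pumping:
  assumes "walk R p w q" "finite Q" "p \<in> Q"
    and rules: "\<forall>(s, x, s') \<in> R. x \<noteq> [] \<and> length x \<le> K \<and> s' \<in> Q"
    and "K * card Q < length w"
  shows "\<not> cycle_free R p w q"
proof
  assume "cycle_free R p w q"
  then have "length w + K \<le> K * card (visited R p w q)"
    using cycle_free_length[OF assms(1) _ assms(2,3) rules] by blast
  moreover have "visited R p w q \<subseteq> Q"
    using \<open>p \<in> Q\<close> by (rule visited_subset) (use rules in auto)
  then have "card (visited R p w q) \<le> card Q"
    using \<open>finite Q\<close> by (rule card_mono[rotated])
  then have "K * card (visited R p w q) \<le> K * card Q" by simp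
  ultimately show False using assms(5) by linarith
qed

lemma avoids_Nil: "(\<And>x q. (p, x, q) \<in> R \<Longrightarrow> x \<noteq> []) \<Longrightarrow> avoids R p []"
  unfolding avoids_def Sigma_p_def by auto

lemma walk_moves:
  assumes "walk R q w q'" and nonempty: "\<And>p x p'. (p, x, p') \<in> R \<Longrightarrow> x \<noteq> []"
  shows "(move R)\<^sup>*\<^sup>* (t, q, w @ v) (t, q', v)"
  using assms(1)
proof (induction rule: walk.induct)
  case (step q x q' w q'')
  have "move R (t, q, [] @ x @ (w @ v)) (t @ [], q', w @ v)"
    using step.hyps(1) avoids_Nil[OF nonempty] by (intro move.delete) auto
  with step.IH show ?case by simp
qed simp

lemma moves_walk:
  assumes "(move R)\<^sup>*\<^sup>* (t, p, v) (t', p', v')"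
  shows "\<exists>w. walk R p w p'"
proof -
  have "\<exists>w. walk R (fst (snd c)) w (fst (snd c'))" if "(move R)\<^sup>*\<^sup>* c c'" for c c'
    using that
  proof (induction rule: rtranclp_induct)
    case (step c' c'')
    from step.hyps(2) step.IH show ?case
      by cases (auto dest: walk_snoc)
  qed (auto intro: walk.nil)
  from this[OF assms] show ?thesis by simp
qed

abbreviation overlaps :: "abc list \<Rightarrow> abc list \<Rightarrow> bool" where
  "overlaps u x \<equiv> \<exists>u1 u2 x1 x2. u = u1 @ u2 \<and> x = x1 @ x2 \<and> u2 \<noteq> [] \<and> x1 \<noteq> [] \<and> u2 @ x1 = x"

inductive deletes :: "('q \<times> abc list \<times> 'q) set \<Rightarrow> abc list \<times> 'q \<times> abc list \<Rightarrow> abc list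
    \<Rightarrow> abc list \<times> 'q \<times> abc list \<Rightarrow> bool" for R c where
  nil: "deletes R c [] c"
| snoc: "\<lbrakk> deletes R c D (t, p, u @ x @ v); (p, x, q) \<in> R; avoids R p u; \<not> overlaps u x \<rbrakk>
         \<Longrightarrow> deletes R c (D @ x) (t @ u, q, v)"

lemma deletes_moves: "deletes R c D c' \<Longrightarrow> (move R)\<^sup>*\<^sup>* c c'"
  by (induction rule: deletes.induct) (blast intro: move.delete rtranclp.rtrancl_into_rtrancl)+

lemma deletes_walk: "deletes R (t0, L, T) D (t, p, v) \<Longrightarrow> walk R L D p"
  by (induction D "(t, p, v)" arbitrary: t p v rule: deletes.induct) (auto intro: walk.nil walk_snoc)

lemma deletes_append_tape:
  "deletes R (t0, L, T) D (t, p, v) \<Longrightarrow> deletes R (t0, L, T @ z) D (t, p, v @ z)"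
proof (induction D "(t, p, v)" arbitrary: t p v rule: deletes.induct)
  case nil
  then show ?case by (auto intro: deletes.nil)
next
  case (snoc D t p u x v q)
  then show ?case using deletes.snoc[of R _ D t p u x "v @ z"] by simp
qed

lemma deletes_length:
  "deletes R (t0, L, T) D (t, p, v) \<Longrightarrow> length t0 + length T = length t + length v + length D"
  by (induction D "(t, p, v)" arbitrary: t p v rule: deletes.induct) auto

lemma deletes_Nil:
  "deletes R c [] c' \<Longrightarrow> (\<And>p x q. (p, x, q) \<in> R \<Longrightarrow> x \<noteq> []) \<Longrightarrow> c' = c"
  by (cases rule: deletes.cases) auto

text \<open>Since \<open>False < True\<close>, this says that every \<open>a\<close> precedes every other letter.\<close>

definition a_first :: "abc list \<Rightarrow> bool" where
  "a_first w \<longleftrightarrow> sorted (map (\<lambda>l. l \<noteq> La) w)"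

lemma a_first_drop: "a_first (u @ x @ v) \<Longrightarrow> a_first (u @ v)"
  unfolding a_first_def by (auto simp: sorted_append)

lemma a_first_split:
  "a_first w \<Longrightarrow> \<exists>u v. w = u @ v \<and> set u \<subseteq> {La} \<and> La \<notin> set v"
proof (induction w)
  case (Cons l w)
  show ?case
  proof (cases "l = La")
    case True
    with Cons obtain u v where "w = u @ v" "set u \<subseteq> {La}" "La \<notin> set v"
      by (auto simp: a_first_def)
    with True have "l # w = (l # u) @ v" "set (l # u) \<subseteq> {La}" by auto
    with \<open>La \<notin> set v\<close> show ?thesis by blast
  next
    case False
    with Cons.prems have "La \<notin> set (l # w)" by (auto simp: a_first_def)
    moreover have "l # w = [] @ l # w" "set [] \<subseteq> {La}" by simp_all
    ultimately show ?thesis by blast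
  qed
qed simp

lemma deletes_a_first:
  "deletes R ([], L, T) D (t, p, v) \<Longrightarrow> a_first T \<Longrightarrow> a_first (t @ v) \<and> a_first (D @ v)"
proof (induction D "(t, p, v)" arbitrary: t p v rule: deletes.induct)
  case (snoc D t p u x v q)
  then have "a_first ((t @ u) @ x @ v)" "a_first (D @ u @ x @ v)" by simp_all
  then have "a_first ((t @ u) @ v)" "a_first ((D @ x) @ v)"
    using a_first_drop[of "t @ u" x v] a_first_drop[of D u "x @ v"] by simp_all
  then show ?case by simp
qed simp

definition reach_plus :: "'q set \<Rightarrow> ('q \<times> abc list \<times> 'q) set \<Rightarrow> 'q \<Rightarrow> 'q set" where
  "reach_plus Q R p = {q \<in> Q. \<exists>w. w \<noteq> [] \<and> walk R p w q}"

lemma card_reach_plus_le: "finite Q \<Longrightarrow> card (reach_plus Q R p) \<le> card Q"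
  unfolding reach_plus_def by (rule card_mono) auto

lemma card_reach_plus_less:
  assumes "finite Q" "p \<in> Q" "walk R L D p" "D \<noteq> []" and acyclic: "\<And>z. walk R p z p \<Longrightarrow> z = []"
  shows "card (reach_plus Q R p) < card (reach_plus Q R L)"
proof (rule psubset_card_mono)
  show "finite (reach_plus Q R L)" using \<open>finite Q\<close> by (simp add: reach_plus_def)
  have "reach_plus Q R p \<subseteq> reach_plus Q R L"
    using walk_append[OF assms(3)] assms(4) by (auto simp: reach_plus_def)
  moreover have "p \<in> reach_plus Q R L" "p \<notin> reach_plus Q R p"
    using assms(2-4) acyclic by (auto simp: reach_plus_def)
  ultimately show "reach_plus Q R p \<subset> reach_plus Q R L" by blast
qed

lemma Dc_counts: "w \<in> Dc \<Longrightarrow> count_list w La = count_list w Lb \<and> count_list w Lc = 1"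
  unfolding Dc_def dyck_def by (auto simp: count_list_0_iff)

lemma Dc_last: "w \<in> Dc \<Longrightarrow> w \<noteq> [] \<and> last w = Lc"
  unfolding Dc_def by auto

lemma count_list_replicate: "count_list (replicate n a) b = (if a = b then n else 0)"
  by (induction n) auto

lemma dyck_replicate: "dyck (replicate n La @ replicate n Lb)"
  unfolding dyck_def
proof (intro conjI allI impI)
  fix u assume "prefix u (replicate n La @ replicate n Lb)"
  then obtain k where "u = take k (replicate n La @ replicate n Lb)"
    by (metis append_eq_conv_conj prefix_def)
  then show "count_list u Lb \<le> count_list u La"
    by (simp add: count_list_replicate)
qed (auto simp: count_list_replicate)

locale Dc_recognizer =
  fixes Q :: "'q set" and q0 :: 'q and F :: "'q set" and R :: "('q \<times> abc list \<times> 'q) set"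
    and K :: nat
  assumes grlowjfa: "grlowjfa Q q0 F R"
    and accepts_Dc: "L_GRL q0 F R = Dc"
    and rule_length: "(p, x, q) \<in> R \<Longrightarrow> length x \<le> K"
begin

lemma finite_states: "finite Q"
  and initial_state: "q0 \<in> Q"
  and rule_nonempty: "(p, x, q) \<in> R \<Longrightarrow> x \<noteq> []"
  and rule_target: "(p, x, q) \<in> R \<Longrightarrow> q \<in> Q"
  using grlowjfa unfolding grlowjfa_def by auto

lemma rule_bounds: "\<forall>(p, x, q) \<in> R. x \<noteq> [] \<and> length x \<le> K \<and> q \<in> Q"
  using rule_nonempty rule_length rule_target by blast

lemma reachable_state: "walk R q0 u p \<Longrightarrow> p \<in> Q"
  using walk_in_states initial_state rule_target by metis

lemma accepted_after_walk:
  assumes "walk R q0 u p" "(move R)\<^sup>*\<^sup>* ([], p, T) ([], qf, [])" "qf \<in> F"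
  shows "u @ T \<in> Dc"
proof -
  have "(move R)\<^sup>*\<^sup>* ([], q0, u @ T) ([], p, T)"
    using assms(1) rule_nonempty by (rule walk_moves)
  then have "(move R)\<^sup>*\<^sup>* ([], q0, u @ T) ([], qf, [])"
    using assms(2) by (rule rtranclp_trans)
  with assms(3) have "u @ T \<in> L_GRL q0 F R" unfolding L_GRL_def by blast
  then show ?thesis using accepts_Dc by simp
qed

lemma cycle_letters:
  assumes "walk R q0 u s" "walk R s z s" "walk R s w qf" "qf \<in> F" "z \<noteq> []"
  shows "La \<in> set z \<and> Lb \<in> set z \<and> Lc \<notin> set z"
proof -
  have "walk R q0 (u @ w) qf" "walk R q0 (u @ z @ w) qf"
    using assms(1-3) by (auto intro: walk_append)
  then have "u @ w \<in> Dc" "u @ z @ w \<in> Dc"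
    using accepted_after_walk[of _ qf "[]"] assms(4) by auto
  then have balanced: "count_list z La = count_list z Lb" "count_list z Lc = 0"
    using Dc_counts[of "u @ w"] Dc_counts[of "u @ z @ w"] by simp_all
  then have "Lc \<notin> set z" by (simp add: count_list_0_iff)
  moreover have "La \<in> set z \<or> Lb \<in> set z"
    using \<open>z \<noteq> []\<close> \<open>Lc \<notin> set z\<close> by (metis abc.exhaust list.set_sel(1))
  ultimately show ?thesis
    using balanced(1) by (metis count_list_0_iff)
qed

lemma walk_length_missing_letter:
  assumes "walk R q0 u s" "walk R s y s'" "walk R s' w qf" "qf \<in> F" "l \<notin> set y" "l \<noteq> Lc"
  shows "length y \<le> K * card Q"
proof (rule ccontr)
  assume "\<not> ?thesis"
  then have "\<not> cycle_free R s y s'"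
    using walk_pumping[OF assms(2) finite_states reachable_state[OF assms(1)] rule_bounds] by simp
  then obtain y1 z y2 s'' where y: "y = y1 @ z @ y2" "z \<noteq> []"
    and "walk R s y1 s''" and cycle: "walk R s'' z s''" and "walk R s'' y2 s'"
    unfolding cycle_free_def by blast
  with assms(1,3) have "walk R q0 (u @ y1) s''" "walk R s'' (y2 @ w) qf"
    by (auto intro: walk_append)
  then have "La \<in> set z \<and> Lb \<in> set z"
    using cycle_letters[OF _ cycle _ assms(4) y(2)] by blast
  then have "La \<in> set y \<and> Lb \<in> set y" using y(1) by auto
  with assms(5,6) show False by (cases l) auto
qed

lemma a_first_walk_length:
  assumes "walk R q0 u L" "walk R L D p" "walk R p w qf" "qf \<in> F" "a_first D"
  shows "length D \<le> K * (2 * card Q + 1)"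
proof -
  obtain Da Db where D: "D = Da @ Db" "set Da \<subseteq> {La}" "La \<notin> set Db"
    using a_first_split[OF assms(5)] by blast
  obtain u1 u2 v1 v2 s s' where split: "Da = u1 @ u2" "Db = v1 @ v2" "walk R L u1 s"
    "walk R s (u2 @ v1) s'" "walk R s' v2 p" "length (u2 @ v1) \<le> K"
    by (rule walk_split_append[OF assms(2)[unfolded D(1)] rule_length])
  have "walk R s ((u2 @ v1) @ v2 @ w) qf"
    using split(4,5) assms(3) by (blast intro: walk_append)
  moreover have "Lb \<notin> set u1" using D(2) split(1) by auto
  ultimately have "length u1 \<le> K * card Q"
    using walk_length_missing_letter[OF assms(1) split(3) _ assms(4)] by simp
  have "walk R q0 ((u @ u1) @ u2 @ v1) s'"
    using assms(1) split(3,4) by (blast intro: walk_append)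
  moreover have "La \<notin> set v2" using D(3) split(2) by auto
  ultimately have "length v2 \<le> K * card Q"
    using walk_length_missing_letter[OF _ split(5) assms(3,4)] by simp
  moreover note \<open>length u1 \<le> K * card Q\<close>
  ultimately show ?thesis
    using D(1) split(1,2,6) by (simp add: algebra_simps)
qed

lemma jump_state_acyclic:
  assumes L: "walk R q0 u L" and phase: "deletes R ([], L, T) D (t, p, v)"
    and jump: "t \<noteq> []" "avoids R p v"
    and accept: "(move R)\<^sup>*\<^sup>* ([], p, t @ v) ([], qf, [])" "qf \<in> F"
    and cycle: "walk R p z p"
  shows "z = []"
proof (rule ccontr)
  assume "z \<noteq> []"
  from cycle this obtain x p' r where x: "(p, x, p') \<in> R" and r: "walk R p' r p" and z: "z = x @ r"
    by (cases rule: walk.cases) auto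
  have p: "walk R q0 (u @ D) p"
    using L deletes_walk[OF phase] by (rule walk_append)
  obtain w where "walk R p w qf" using moves_walk[OF accept(1)] by blast
  with p have "Lc \<notin> set z" using cycle_letters[OF p cycle _ accept(2) \<open>z \<noteq> []\<close>] by blast
  have "(u @ D) @ t @ v \<in> Dc" using accepted_after_walk[OF p accept] .
  with jump(1) have last: "last (t @ v) = Lc" using Dc_last by fastforce
  have "\<not> overlaps v x"
  proof
    assume "overlaps v x"
    then obtain u1 u2 x1 where "v = u1 @ u2" "u2 \<noteq> []" "u2 @ x1 = x" by blast
    then have "last (t @ v) \<in> set z" using z by auto
    with last \<open>Lc \<notin> set z\<close> show False by simp
  qed
  have "(move R)\<^sup>*\<^sup>* ([], q0, u @ T @ z) ([], L, T @ z)"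
    using L rule_nonempty by (rule walk_moves)
  also have "(move R)\<^sup>*\<^sup>* ([], L, T @ z) (t, p, v @ x @ r)"
    using deletes_moves[OF deletes_append_tape[OF phase]] z by simp
  also have "move R (t, p, v @ x @ r) (t @ v, p', r)"
    using x jump(2) \<open>\<not> overlaps v x\<close> by (rule move.delete)
  also have "(move R)\<^sup>*\<^sup>* (t @ v, p', r) (t @ v, p, [])"
    using walk_moves[OF r rule_nonempty, where t = "t @ v" and v = "[]"] by simp
  also have "move R (t @ v, p, []) ([], p, t @ v)"
    using move.jump[of "t @ v" R p "[]"] jump(1) avoids_Nil[of p R] rule_nonempty by auto
  also note accept(1)
  finally have "u @ T @ z \<in> Dc"
    using accept(2) accepts_Dc unfolding L_GRL_def by blast
  with \<open>z \<noteq> []\<close> have "Lc \<in> set z" using Dc_last by (metis append_is_Nil_conv last_appendR last_in_set)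
  with \<open>Lc \<notin> set z\<close> show False ..
qed

lemma tape_length_bound:
  assumes "(move R)\<^sup>*\<^sup>* c ([], qf, [])" "qf \<in> F"
    and "deletes R ([], L, T) D c" "walk R q0 u L" "a_first T"
  shows "length T \<le> K * (2 * card Q + 1) * (card (reach_plus Q R L) + 1)"
  using assms(1,3-5)
proof (induction arbitrary: L T D u rule: converse_rtranclp_induct)
  case base
  have "length T = length D" using deletes_length[OF base(1)] by simp
  moreover have "a_first D" using deletes_a_first[OF base(1,3)] by simp
  then have "length D \<le> K * (2 * card Q + 1)"
    using a_first_walk_length[OF base(2) deletes_walk[OF base(1)] walk.nil assms(2)] by simp
  ultimately show ?case by (simp add: le_trans[OF _ mult_le_mono2])
next
  case (step c c')
  from step.hyps(1) show ?case
  proof cases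
    case (delete p x q w t v)
    with step.prems(1) have "deletes R ([], L, T) (D @ x) c'"
      using deletes.snoc[OF _ delete(3-5)] by simp
    with step.IH step.prems(2,3) show ?thesis by blast
  next
    case (jump t p v)
    let ?B = "K * (2 * card Q + 1)"
    have phase: "deletes R ([], L, T) D (t, p, v)" using step.prems(1) jump(1) by simp
    have accept: "(move R)\<^sup>*\<^sup>* ([], p, t @ v) ([], qf, [])" using step.hyps(2) jump(2) by simp
    have D: "walk R L D p" using deletes_walk[OF phase] .
    with step.prems(2) have p: "walk R q0 (u @ D) p" by (rule walk_append)
    have "a_first (t @ v)" "a_first (D @ v)" using deletes_a_first[OF phase step.prems(3)] by auto
    then have "length (t @ v) \<le> ?B * (card (reach_plus Q R p) + 1)"
      using step.IH[of p "t @ v" "[]" "u @ D"] jump(2) p deletes.nil by blast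
    moreover have "length D \<le> ?B"
    proof -
      obtain w where "walk R p w qf" using moves_walk[OF accept] by blast
      moreover have "a_first D" using a_first_drop[of D v "[]"] \<open>a_first (D @ v)\<close> by simp
      ultimately show ?thesis using a_first_walk_length step.prems(2) D assms(2) by blast
    qed
    moreover have "card (reach_plus Q R p) < card (reach_plus Q R L)"
    proof (rule card_reach_plus_less[OF finite_states reachable_state[OF p] D])
      show "D \<noteq> []" using deletes_Nil[of R "([], L, T)" "(t, p, v)"] phase rule_nonempty jump(3) by blast
      show "z = []" if "walk R p z p" for z
        using jump_state_acyclic[OF step.prems(2) phase jump(3,4) accept assms(2) that] .
    qed
    moreover have "length T = length (t @ v) + length D" using deletes_length[OF phase] by simp
    ultimately show ?thesis
      using mult_le_mono2[of "card (reach_plus Q R p) + 2" "card (reach_plus Q R L) + 1" ?B]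
      by (simp add: algebra_simps)
  qed
qed

end

theorem lemma6:
  fixes Q :: "'q set" and q0 :: 'q and F :: "'q set" and R :: "('q \<times> abc list \<times> 'q) set"
  shows "\<not> (grlowjfa Q q0 F R \<and> L_GRL q0 F R = Dc)"
proof
  assume recognizer: "grlowjfa Q q0 F R \<and> L_GRL q0 F R = Dc"
  obtain K where "\<And>p x q. (p, x, q) \<in> R \<Longrightarrow> length x \<le> K"
  proof -
    have "finite ((\<lambda>(p, x, q). length x) ` R)"
      using recognizer unfolding grlowjfa_def by simp
    then obtain K where "\<forall>n \<in> (\<lambda>(p, x, q). length x) ` R. n \<le> K"
      using finite_nat_set_iff_bounded_le by blast
    with that show thesis by fastforce
  qed
  with recognizer interpret Dc_recognizer Q q0 F R K by unfold_locales auto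
  define B where "B = K * (2 * card Q + 1)"
  define n where "n = B * (card Q + 1)"
  define I where "I = replicate n La @ replicate n Lb @ [Lc]"
  have "I \<in> Dc" unfolding I_def Dc_def using dyck_replicate[of n] by force
  then obtain qf where "(move R)\<^sup>*\<^sup>* ([], q0, I) ([], qf, [])" and "qf \<in> F"
    using accepts_Dc unfolding L_GRL_def by blast
  moreover have "a_first I" unfolding I_def a_first_def by (simp add: sorted_append)
  ultimately have "length I \<le> B * (card (reach_plus Q R q0) + 1)"
    unfolding B_def using tape_length_bound[OF _ _ deletes.nil walk.nil] by blast
  also have "\<dots> \<le> n"
    using card_reach_plus_le[OF finite_states] by (simp add: n_def)
  finally show False by (simp add: I_def)
qed

end
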